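(* Let $m$ be a universal probability and let $R$ be a lower-computable semi-POVM. Then: (i) there exists $c>0$ such that for every unit vector $|\psi\rangle\in\mathbb{C}^N$ and every $s\in\Sigma^*$, $\langle\psi|R(s)|\psi\rangle\le c\,m(s)$; (ii) there exists $c>0$ such that for every density matrix $\rho\in\mathrm{Her}(N)$ and every $s\in\Sigma^*$, $\operatorname{tr}(\rho R(s))\le c\,m(s)$.
   Context: $N$ is a fixed positive integer; $\Sigma^*$ is the set of finite binary strings. $\mathrm{Her}(N)$ is the set of $N\times N$ Hermitian matrices and $\mathrm{Her}_Q(N)$ those with entries in $\{a+ib:a,b\in\mathbb{Q}\}$; $A\leqslant B$ means $B-A$ is positive semi-definite. A density matrix is $\rho\in\mathrm{Her}(N)$, $0\leqslant\rho$, $\operatorname{tr}\rho=1$. A lower-computable semi-measure is a function $r:\Sigma^*\to[0,\infty)$ with $\sum_s r(s)\le 1$ such that there is a total recursive $f:\mathbb{N}\times\Sigma^*\to\mathbb{Q}$ with $\lim_{n}f(n,s)=r(s)$ and $f(n,s)\le f(n+1,s)$ for all $n,s$. A universal probability is a lower-computable semi-measure $m$ such that for every lower-computable semi-measure $r$ there is $c>0$ with $c\,r(s)\le m(s)$ for all $s$. A semi-POVM on $\Sigma^*$ is a map $R:\Sigma^*\to\mathrm{Her}(N)$ with $0\leqslant R(s)$ for all $s$ and $\sum_s R(s)\leqslant I$. A lower-computable semi-POVM is a semi-POVM $R$ for which there is a total recursive $f:\mathbb{N}\times\Sigma^*\to\mathrm{Her}_Q(N)$ with $\lim_{n}f(n,s)=R(s)$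 and $f(n,s)\leqslant R(s)$ for all $n,s$. *)

theory Defs
  imports "HOL-Analysis.Infinite_Sum" "HOL-Library.Nat_Bijection" "Jordan_Normal_Form.Matrix"
begin

inductive total_rec :: "nat \<Rightarrow> (nat list \<Rightarrow> nat) \<Rightarrow> bool" where
  tr_zero: "total_rec n (\<lambda>xs. 0)"
| tr_succ: "total_rec 1 (\<lambda>xs. Suc (hd xs))"
| tr_proj: "i < n \<Longrightarrow> total_rec n (\<lambda>xs. xs ! i)"
| tr_comp: "total_rec m g \<Longrightarrow> length fs = m \<Longrightarrow> (\<forall>f\<in>set fs. total_rec n f)
            \<Longrightarrow> total_rec n (\<lambda>xs. g (map (\<lambda>f. f xs) fs))"
| tr_prim: "total_rec n g \<Longrightarrow> total_rec (Suc (Suc n)) h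
            \<Longrightarrow> total_rec (Suc n) (\<lambda>xs. rec_nat (g (tl xs)) (\<lambda>k r. h (k # r # tl xs)) (hd xs))"
| tr_mu: "total_rec (Suc n) g \<Longrightarrow> (\<forall>xs. length xs = n \<longrightarrow> (\<exists>y. g (y # xs) = 0))
            \<Longrightarrow> total_rec n (\<lambda>xs. LEAST y. g (y # xs) = 0)"

definition computable :: "(nat \<Rightarrow> nat) \<Rightarrow> bool" where
  "computable F \<longleftrightarrow> (\<exists>f. total_rec 1 f \<and> (\<forall>x. f [x] = F x))"

text \<open>Bijective binary numeration: a bijection between binary strings and nat.\<close>
fun str_code :: "bool list \<Rightarrow> nat" where
  "str_code [] = 0"
| "str_code (b # bs) = 2 * str_code bs + (if b then 2 else 1)"

definition rat_decode :: "nat \<Rightarrow> rat" where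
  "rat_decode c = (case prod_decode c of (p, d) \<Rightarrow> of_int (int_decode p) / of_nat (Suc d))"

definition gauss_decode :: "nat \<Rightarrow> complex" where
  "gauss_decode c = (case prod_decode c of (a, b) \<Rightarrow>
      Complex (of_rat (rat_decode a)) (of_rat (rat_decode b)))"

definition mat_decode :: "nat \<Rightarrow> nat \<Rightarrow> complex mat" where
  "mat_decode N c = (let xs = list_decode c in
      mat N N (\<lambda>(i, j). if i * N + j < length xs then gauss_decode (xs ! (i * N + j)) else 0))"

definition hermitian :: "nat \<Rightarrow> complex mat \<Rightarrow> bool" where
  "hermitian N A \<longleftrightarrow> A \<in> carrier_mat N N \<and> (\<forall>i<N. \<forall>j<N. A $$ (i, j) = cnj (A $$ (j, i)))"

definition gauss_rat :: "complex \<Rightarrow> bool" where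
  "gauss_rat z \<longleftrightarrow> Re z \<in> \<rat> \<and> Im z \<in> \<rat>"

definition hermitian_Q :: "nat \<Rightarrow> complex mat \<Rightarrow> bool" where
  "hermitian_Q N A \<longleftrightarrow> hermitian N A \<and> (\<forall>i<N. \<forall>j<N. gauss_rat (A $$ (i, j)))"

definition psd :: "nat \<Rightarrow> complex mat \<Rightarrow> bool" where
  "psd N A \<longleftrightarrow> hermitian N A \<and>
     (\<forall>v \<in> carrier_vec N. 0 \<le> Re (conjugate v \<bullet> (A *\<^sub>v v)))"

definition loewner_le :: "nat \<Rightarrow> complex mat \<Rightarrow> complex mat \<Rightarrow> bool" where
  "loewner_le N A B \<longleftrightarrow> hermitian N A \<and> hermitian N B \<and> psd N (B - A)"

definition mat_trace :: "nat \<Rightarrow> complex mat \<Rightarrow> complex" where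
  "mat_trace N A = (\<Sum>i<N. A $$ (i, i))"

definition density_matrix :: "nat \<Rightarrow> complex mat \<Rightarrow> bool" where
  "density_matrix N \<rho> \<longleftrightarrow> hermitian N \<rho> \<and> loewner_le N (0\<^sub>m N N) \<rho> \<and> mat_trace N \<rho> = 1"

definition unit_vector :: "nat \<Rightarrow> complex vec \<Rightarrow> bool" where
  "unit_vector N \<psi> \<longleftrightarrow> \<psi> \<in> carrier_vec N \<and> (\<Sum>i<N. (cmod (\<psi> $ i))\<^sup>2) = 1"

definition semi_measure :: "(bool list \<Rightarrow> real) \<Rightarrow> bool" where
  "semi_measure r \<longleftrightarrow> (\<forall>s. 0 \<le> r s) \<and> r summable_on UNIV \<and> (\<Sum>\<^sub>\<infinity>s. r s) \<le> 1"

definition lower_computable_semi_measure :: "(bool list \<Rightarrow> real) \<Rightarrow> bool" where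
  "lower_computable_semi_measure r \<longleftrightarrow> semi_measure r \<and>
     (\<exists>F. computable F \<and>
        (\<forall>s. (\<lambda>n. real_of_rat (rat_decode (F (prod_encode (n, str_code s))))) \<longlonglongrightarrow> r s) \<and>
        (\<forall>n s. rat_decode (F (prod_encode (n, str_code s)))
               \<le> rat_decode (F (prod_encode (Suc n, str_code s)))))"

definition universal_probability :: "(bool list \<Rightarrow> real) \<Rightarrow> bool" where
  "universal_probability m \<longleftrightarrow> lower_computable_semi_measure m \<and>
     (\<forall>r. lower_computable_semi_measure r \<longrightarrow> (\<exists>c>0. \<forall>s. c * r s \<le> m s))"

definition mat_sum :: "nat \<Rightarrow> (bool list \<Rightarrow> complex mat) \<Rightarrow> bool list set \<Rightarrow> complex mat" where
  "mat_sum N R F = mat N N (\<lambda>(i, j). \<Sum>s\<in>F. R s $$ (i, j))"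

text \<open>Since all R(s) are positive, the series sum R(s) \<le> I means all finite partial sums are \<le> I.\<close>
definition semi_POVM :: "nat \<Rightarrow> (bool list \<Rightarrow> complex mat) \<Rightarrow> bool" where
  "semi_POVM N R \<longleftrightarrow> (\<forall>s. loewner_le N (0\<^sub>m N N) (R s)) \<and>
     (\<forall>F. finite F \<longrightarrow> loewner_le N (mat_sum N R F) (1\<^sub>m N))"

definition mat_tendsto :: "nat \<Rightarrow> (nat \<Rightarrow> complex mat) \<Rightarrow> complex mat \<Rightarrow> bool" where
  "mat_tendsto N X A \<longleftrightarrow> (\<forall>i<N. \<forall>j<N. (\<lambda>n. X n $$ (i, j)) \<longlonglongrightarrow> A $$ (i, j))"

definition lower_computable_semi_POVM :: "nat \<Rightarrow> (bool list \<Rightarrow> complex mat) \<Rightarrow> bool" where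
  "lower_computable_semi_POVM N R \<longleftrightarrow> semi_POVM N R \<and>
     (\<exists>F. computable F \<and>
        (\<forall>n s. hermitian_Q N (mat_decode N (F (prod_encode (n, str_code s))))) \<and>
        (\<forall>s. mat_tendsto N (\<lambda>n. mat_decode N (F (prod_encode (n, str_code s)))) (R s)) \<and>
        (\<forall>n s. loewner_le N (mat_decode N (F (prod_encode (n, str_code s)))) (R s)))"

end

theory Submission
  imports Defs "HOL-Library.More_List"
begin

text \<open>
  Each diagonal entry s \<mapsto> R(s)_ii of a lower-computable semi-POVM is itself a lower-computable
  semi-measure: the rational approximants of R(s) from below have diagonal entries below R(s)_ii
  that converge to it, and their running maximum is a computable increasing approximation.
  By universality each of these, and hence tr R(s), is bounded by a constant multiple of m(s).
  For a positive semi-definite A one has 2 |A_ij| \<le> A_ii + A_jj, so both <psi|A|psi> and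
  tr(rho A) are at most N tr A when psi is a unit vector and rho a density matrix.
\<close>

section \<open>Total recursive functions\<close>

\<comment> \<open>total_rec n f says nothing about f on lists of length other than n, so we identify
  functions that agree on lists of length n\<close>
definition total_recursive :: "nat \<Rightarrow> (nat list \<Rightarrow> nat) \<Rightarrow> bool" where
  "total_recursive n F \<longleftrightarrow> (\<exists>f. total_rec n f \<and> (\<forall>xs. length xs = n \<longrightarrow> f xs = F xs))"

lemma total_recursive_cong:
  assumes "total_recursive n F" "\<And>xs. length xs = n \<Longrightarrow> F xs = G xs"
  shows "total_recursive n G"
  using assms unfolding total_recursive_def by metis

lemma total_recursive_proj [intro!]: "i < n \<Longrightarrow> total_recursive n (\<lambda>xs. xs ! i)"
  unfolding total_recursive_def by (blast intro: tr_proj)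

lemma total_recursive_comp:
  assumes G: "total_recursive m G" and len: "length Fs = m"
    and Fs: "\<forall>F\<in>set Fs. total_recursive n F"
  shows "total_recursive n (\<lambda>xs. G (map (\<lambda>F. F xs) Fs))"
proof -
  obtain g where g: "total_rec m g" "\<And>xs. length xs = m \<Longrightarrow> g xs = G xs"
    using G unfolding total_recursive_def by blast
  obtain f where f: "\<And>F. F \<in> set Fs \<Longrightarrow> total_rec n (f F) \<and> (\<forall>xs. length xs = n \<longrightarrow> f F xs = F xs)"
    using bchoice[OF Fs[unfolded total_recursive_def]] by blast
  have "total_rec n (\<lambda>xs. g (map (\<lambda>h. h xs) (map f Fs)))"
    by (rule tr_comp[OF g(1)]) (use len f in auto)
  moreover have "g (map (\<lambda>h. h xs) (map f Fs)) = G (map (\<lambda>F. F xs) Fs)" if "length xs = n" for xs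
  proof -
    have "map (\<lambda>h. h xs) (map f Fs) = map (\<lambda>F. F xs) Fs"
      unfolding map_map by (rule map_cong) (use f that in auto)
    then show ?thesis using g(2) len by (metis length_map)
  qed
  ultimately show ?thesis unfolding total_recursive_def by blast
qed

lemma computable_iff_total_recursive: "computable G \<longleftrightarrow> total_recursive 1 (\<lambda>xs. G (xs ! 0))"
  unfolding computable_def total_recursive_def by (auto simp: length_Suc_conv)

lemma total_recursive_computable:
  assumes "computable G" "total_recursive n F"
  shows "total_recursive n (\<lambda>xs. G (F xs))"
  using total_recursive_comp[OF assms(1)[unfolded computable_iff_total_recursive], of "[F]"] assms(2)
  by simp

lemma total_recursive_drop:
  assumes "total_recursive n G" "k + n = m"
  shows "total_recursive m (\<lambda>ys. G (drop k ys))"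
proof -
  have drop_eq: "map (\<lambda>i. ys ! (k + i)) [0..<n] = drop k ys" if "length ys = m" for ys :: "nat list"
    using that assms(2) by (intro nth_equalityI) auto
  have "total_recursive m (\<lambda>ys. G (map (\<lambda>F. F ys) (map (\<lambda>i ys. ys ! (k + i)) [0..<n])))"
    using assms by (intro total_recursive_comp) auto
  then show ?thesis
    by (rule total_recursive_cong) (simp add: comp_def drop_eq)
qed

lemma total_recursive_Suc [intro!]:
  assumes "total_recursive n F"
  shows "total_recursive n (\<lambda>xs. Suc (F xs))"
proof -
  have "total_recursive 1 (\<lambda>xs. Suc (xs ! 0))"
    unfolding total_recursive_def
    by (intro exI[of _ "\<lambda>xs. Suc (hd xs)"] conjI tr_succ) (auto simp: length_Suc_conv)
  from total_recursive_comp[OF this, of "[F]"] assms show ?thesis by simp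
qed

lemma total_recursive_const [intro!]: "total_recursive n (\<lambda>xs. k)"
proof (induction k)
  case 0
  show ?case unfolding total_recursive_def by (blast intro: tr_zero)
next
  case (Suc k)
  then show ?case by (rule total_recursive_Suc)
qed

lemma total_recursive_rec_nat:
  assumes A: "total_recursive n A"
    and B: "total_recursive (Suc (Suc n)) (\<lambda>ys. B (ys ! 0) (ys ! 1) (drop 2 ys))"
    and C: "total_recursive n C"
  shows "total_recursive n (\<lambda>xs. rec_nat (A xs) (\<lambda>k r. B k r xs) (C xs))"
proof -
  obtain a where a: "total_rec n a" "\<And>xs. length xs = n \<Longrightarrow> a xs = A xs"
    using A unfolding total_recursive_def by blast
  obtain b where b: "total_rec (Suc (Suc n)) b"
      "\<And>ys. length ys = Suc (Suc n) \<Longrightarrow> b ys = B (ys ! 0) (ys ! 1) (drop 2 ys)"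
    using B unfolding total_recursive_def by blast
  have "rec_nat (a (tl ys)) (\<lambda>k r. b (k # r # tl ys)) x
      = rec_nat (A (tl ys)) (\<lambda>k r. B k r (tl ys)) x"
    if "length ys = Suc n" for ys x
    using that by (induction x) (simp_all add: a(2) b(2))
  then have "total_recursive (Suc n) (\<lambda>ys. rec_nat (A (tl ys)) (\<lambda>k r. B k r (tl ys)) (hd ys))"
    unfolding total_recursive_def using tr_prim[OF a(1) b(1)] by fastforce
  from total_recursive_comp[OF this, of "C # map (\<lambda>i xs. xs ! i) [0..<n]" n]
  have "total_recursive n (\<lambda>xs. rec_nat (A (map (\<lambda>i. xs ! i) [0..<n]))
      (\<lambda>k r. B k r (map (\<lambda>i. xs ! i) [0..<n])) (C xs))"
    using C by (simp add: comp_def total_recursive_proj)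
  then show ?thesis
    by (rule total_recursive_cong) (metis map_nth)
qed

lemma total_recursive_Least:
  assumes G: "total_recursive (Suc n) G" and ex: "\<And>xs. length xs = n \<Longrightarrow> \<exists>y. G (y # xs) = 0"
  shows "total_recursive n (\<lambda>xs. LEAST y. G (y # xs) = 0)"
proof -
  obtain g where g: "total_rec (Suc n) g" "\<And>xs. length xs = Suc n \<Longrightarrow> g xs = G xs"
    using G unfolding total_recursive_def by blast
  have "total_rec n (\<lambda>xs. LEAST y. g (y # xs) = 0)"
    by (rule tr_mu[OF g(1)]) (use ex g(2) in auto)
  then show ?thesis
    unfolding total_recursive_def using g(2) by (intro exI[of _ "\<lambda>xs. LEAST y. g (y # xs) = 0"]) simp
qed

lemma total_recursive_add [intro!]:
  assumes "total_recursive n F" "total_recursive n G"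
  shows "total_recursive n (\<lambda>xs. F xs + G xs)"
proof -
  have "rec_nat y (\<lambda>k r. Suc r) x = x + y" for x y :: nat
    by (induction x) auto
  moreover have "total_recursive n (\<lambda>xs. rec_nat (G xs) (\<lambda>k r. Suc r) (F xs))"
    by (rule total_recursive_rec_nat) (use assms in auto)
  ultimately show ?thesis by simp
qed

lemma total_recursive_mult [intro!]:
  assumes "total_recursive n F" "total_recursive n G"
  shows "total_recursive n (\<lambda>xs. F xs * G xs)"
proof -
  have "rec_nat 0 (\<lambda>k r. r + y) x = x * y" for x y :: nat
    by (induction x) auto
  moreover have "total_recursive n (\<lambda>xs. rec_nat 0 (\<lambda>k r. r + G xs) (F xs))"
  proof (rule total_recursive_rec_nat)
    have "total_recursive (Suc (Suc n)) (\<lambda>ys. G (drop 2 ys))"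
      using assms(2) by (rule total_recursive_drop) simp
    then show "total_recursive (Suc (Suc n)) (\<lambda>ys. ys ! 1 + G (drop 2 ys))"
      by auto
  qed (use assms in auto)
  ultimately show ?thesis by simp
qed

lemma total_recursive_pred:
  assumes "total_recursive n F"
  shows "total_recursive n (\<lambda>xs. F xs - 1)"
proof -
  have "rec_nat 0 (\<lambda>k r. k) x = x - 1" for x :: nat
    by (induction x) auto
  moreover have "total_recursive n (\<lambda>xs. rec_nat 0 (\<lambda>k r. k) (F xs))"
    by (rule total_recursive_rec_nat) (use assms in auto)
  ultimately show ?thesis by simp
qed

lemma total_recursive_diff [intro!]:
  assumes "total_recursive n F" "total_recursive n G"
  shows "total_recursive n (\<lambda>xs. F xs - G xs)"
proof -
  have "rec_nat x (\<lambda>k r. r - 1) y = x - y" for x y :: nat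
    by (induction y) auto
  moreover have "total_recursive n (\<lambda>xs. rec_nat (F xs) (\<lambda>k r. r - 1) (G xs))"
    using assms by (intro total_recursive_rec_nat total_recursive_pred total_recursive_proj) simp_all
  ultimately show ?thesis by simp
qed

lemma total_recursive_mod_2 [intro!]:
  assumes "total_recursive n F"
  shows "total_recursive n (\<lambda>xs. F xs mod 2)"
proof -
  have "rec_nat 0 (\<lambda>k r. 1 - r) x = x mod 2" for x :: nat
    by (induction x) (auto simp: mod_Suc)
  moreover have "total_recursive n (\<lambda>xs. rec_nat 0 (\<lambda>k r. 1 - r) (F xs))"
    by (rule total_recursive_rec_nat) (use assms in auto)
  ultimately show ?thesis by simp
qed

lemma total_recursive_div_2 [intro!]:
  assumes "total_recursive n F"
  shows "total_recursive n (\<lambda>xs. F xs div 2)"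
proof -
  have "rec_nat 0 (\<lambda>k r. r + k mod 2) x = x div 2" for x :: nat
    by (induction x) (auto simp: div_Suc mod_Suc)
  moreover have "total_recursive n (\<lambda>xs. rec_nat 0 (\<lambda>k r. r + k mod 2) (F xs))"
    by (rule total_recursive_rec_nat) (use assms in auto)
  ultimately show ?thesis by simp
qed

lemma total_recursive_triangle [intro!]:
  assumes "total_recursive n F"
  shows "total_recursive n (\<lambda>xs. triangle (F xs))"
proof -
  have "rec_nat 0 (\<lambda>k r. r + Suc k) x = triangle x" for x :: nat
    by (induction x) auto
  moreover have "total_recursive n (\<lambda>xs. rec_nat 0 (\<lambda>k r. r + Suc k) (F xs))"
    by (rule total_recursive_rec_nat) (use assms in auto)
  ultimately show ?thesis by simp
qed

lemma total_recursive_if_le [intro!]: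
  assumes "total_recursive n A" "total_recursive n B" "total_recursive n X" "total_recursive n Y"
  shows "total_recursive n (\<lambda>xs. if A xs \<le> B xs then X xs else Y xs)"
proof -
  have if_eq: "(if a \<le> b then x else y) = (1 - (a - b)) * x + (1 - (1 - (a - b))) * y"
    for a b x y :: nat
    by simp
  show ?thesis
    unfolding if_eq using assms
    by (intro total_recursive_add total_recursive_mult total_recursive_diff total_recursive_const)
qed

lemma total_recursive_triangle_root:
  assumes "total_recursive n F"
  shows "total_recursive n (\<lambda>xs. LEAST y. F xs < triangle (Suc y))"
proof -
  let ?G = "\<lambda>ys. Suc (F (drop 1 ys)) - triangle (Suc (ys ! 0))"
  have "total_recursive n (\<lambda>xs. LEAST y. ?G (y # xs) = 0)"
  proof (rule total_recursive_Least)
    have "total_recursive (Suc n) (\<lambda>ys. F (drop 1 ys))"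
      using assms by (rule total_recursive_drop) simp
    then show "total_recursive (Suc n) ?G" by auto
    show "\<exists>y. ?G (y # xs) = 0" for xs
      by (rule exI[of _ "F xs"]) simp
  qed
  then show ?thesis by (simp add: less_Suc_eq_le)
qed

lemma prod_decode_triangle_root:
  "prod_decode c = (let r = LEAST y. c < triangle (Suc y) in (c - triangle r, r - (c - triangle r)))"
proof -
  define r where "r = (LEAST y. c < triangle (Suc y))"
  have "c < triangle (Suc r)"
    unfolding r_def by (rule LeastI[of _ c]) simp
  then have upper: "c < triangle r + Suc r" by simp
  have lower: "triangle r \<le> c"
  proof (cases r)
    case (Suc k)
    then have "\<not> c < triangle (Suc k)"
      using not_less_Least[of k "\<lambda>y. c < triangle (Suc y)"] unfolding r_def by simp
    then show ?thesis using Suc by simp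
  qed simp
  have "prod_encode (c - triangle r, r - (c - triangle r)) = c"
    using upper lower by (simp add: prod_encode_def)
  then show ?thesis unfolding r_def[symmetric] Let_def by (metis prod_encode_inverse)
qed

lemma prod_decode_0: "prod_decode 0 = (0, 0)"
  using prod_encode_inverse[of "(0, 0)"] by (simp add: prod_encode_def)

lemma total_recursive_prod_decode [intro!]:
  assumes "total_recursive n F"
  shows "total_recursive n (\<lambda>xs. fst (prod_decode (F xs)))"
    and "total_recursive n (\<lambda>xs. snd (prod_decode (F xs)))"
  using total_recursive_triangle_root[OF assms] assms
  by (auto simp: prod_decode_triangle_root Let_def)

lemma total_recursive_prod_encode [intro!]:
  assumes "total_recursive n F" "total_recursive n G"
  shows "total_recursive n (\<lambda>xs. prod_encode (F xs, G xs))"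
  using assms by (auto simp: prod_encode_def)

definition list_code_tl :: "nat \<Rightarrow> nat" where
  "list_code_tl c = snd (prod_decode (c - 1))"

lemma list_decode_list_code_tl: "list_decode (list_code_tl c) = tl (list_decode c)"
  by (cases c) (simp_all add: list_code_tl_def prod_decode_0 split: prod.split)

lemma list_decode_funpow_list_code_tl: "list_decode ((list_code_tl ^^ p) c) = drop p (list_decode c)"
  by (induction p) (simp_all add: list_decode_list_code_tl drop_Suc tl_drop)

lemma nth_default_list_decode:
  "nth_default 0 (list_decode c) p =
    (let d = (list_code_tl ^^ p) c in if d \<le> 0 then 0 else fst (prod_decode (d - 1)))"
proof -
  define d where "d = (list_code_tl ^^ p) c"
  have drop: "drop p (list_decode c) = list_decode d"
    unfolding d_def by (simp add: list_decode_funpow_list_code_tl)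
  show ?thesis
  proof (cases d)
    case 0
    then show ?thesis using drop by (simp add: d_def nth_default_def)
  next
    case (Suc e)
    then have drop_Cons: "drop p (list_decode c) = fst (prod_decode e) # list_decode (snd (prod_decode e))"
      using drop by (simp split: prod.split)
    then have "p < length (list_decode c)"
      by (metis drop_all leI list.distinct(1))
    moreover from this drop_Cons have "list_decode c ! p = fst (prod_decode e)"
      by (metis hd_drop_conv_nth list.sel(1))
    ultimately show ?thesis
      using Suc by (simp add: d_def[symmetric] nth_default_def)
  qed
qed

lemma total_recursive_nth_default_list_decode [intro!]:
  assumes "total_recursive n F"
  shows "total_recursive n (\<lambda>xs. nth_default 0 (list_decode (F xs)) p)"
proof -
  have "total_recursive n (\<lambda>xs. (list_code_tl ^^ p) (F xs))"
    by (induction p) (use assms in \<open>auto simp: list_code_tl_def intro: total_recursive_pred\<close>)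
  then have "total_recursive n (\<lambda>xs. if (list_code_tl ^^ p) (F xs) \<le> 0 then 0
      else fst (prod_decode ((list_code_tl ^^ p) (F xs) - 1)))"
    by (intro total_recursive_if_le total_recursive_prod_decode total_recursive_pred total_recursive_const)
  then show ?thesis by (simp add: nth_default_list_decode Let_def)
qed

\<comment> \<open>int_decode q is q div 2 for even q and -(q div 2 + 1) for odd q; splitting the numerator
  into two natural numbers lets rationals be compared by cross-multiplication in nat\<close>
definition rat_code_pos :: "nat \<Rightarrow> nat" where
  "rat_code_pos c = (let q = fst (prod_decode c) in (1 - q mod 2) * (q div 2))"

definition rat_code_neg :: "nat \<Rightarrow> nat" where
  "rat_code_neg c = (let q = fst (prod_decode c) in q mod 2 * Suc (q div 2))"

definition rat_code_den :: "nat \<Rightarrow> nat" where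
  "rat_code_den c = Suc (snd (prod_decode c))"

lemma rat_decode_code:
  "rat_decode c = (of_nat (rat_code_pos c) - of_nat (rat_code_neg c)) / of_nat (rat_code_den c)"
proof -
  have "int_decode q = int ((1 - q mod 2) * (q div 2)) - int (q mod 2 * Suc (q div 2))" for q
    by (cases "even q") (auto simp: int_decode_def sum_decode_def elim!: oddE)
  then show ?thesis
    by (simp add: rat_decode_def rat_code_pos_def rat_code_neg_def rat_code_den_def
        Let_def split: prod.split)
qed

lemma rat_decode_0: "rat_decode 0 = 0"
  by (simp add: rat_decode_def prod_decode_0 int_decode_def sum_decode_def)

lemma rat_decode_le_iff:
  "rat_decode a \<le> rat_decode b \<longleftrightarrow>
    rat_code_pos a * rat_code_den b + rat_code_neg b * rat_code_den a
      \<le> rat_code_pos b * rat_code_den a + rat_code_neg a * rat_code_den b"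
  (is "_ \<longleftrightarrow> ?lhs \<le> ?rhs")
proof -
  have "0 < rat_code_den a" "0 < rat_code_den b"
    by (simp_all add: rat_code_den_def)
  then have "rat_decode a \<le> rat_decode b \<longleftrightarrow>
      (of_nat (rat_code_pos a) - of_nat (rat_code_neg a)) * of_nat (rat_code_den b)
        \<le> (of_nat (rat_code_pos b) - of_nat (rat_code_neg b)) * (of_nat (rat_code_den a) :: rat)"
    unfolding rat_decode_code by (simp add: divide_simps)
  also have "\<dots> \<longleftrightarrow> (of_nat ?lhs :: rat) \<le> of_nat ?rhs"
    by (simp add: algebra_simps)
  also have "\<dots> \<longleftrightarrow> ?lhs \<le> ?rhs"
    by (rule of_nat_le_iff)
  finally show ?thesis .
qed

lemma total_recursive_if_rat_le [intro!]:
  assumes "total_recursive n F" "total_recursive n G" "total_recursive n X" "total_recursive n Y"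
  shows "total_recursive n (\<lambda>xs. if rat_decode (F xs) \<le> rat_decode (G xs) then X xs else Y xs)"
  unfolding rat_decode_le_iff rat_code_pos_def rat_code_neg_def rat_code_den_def Let_def
  using assms by (intro total_recursive_if_le) auto

definition rat_running_max :: "(nat \<Rightarrow> nat) \<Rightarrow> nat \<Rightarrow> nat" where
  "rat_running_max a n =
    rec_nat (a 0) (\<lambda>k r. if rat_decode r \<le> rat_decode (a (Suc k)) then a (Suc k) else r) n"

lemma rat_running_max_Suc:
  "rat_decode (rat_running_max a (Suc n))
    = max (rat_decode (rat_running_max a n)) (rat_decode (a (Suc n)))"
  by (simp add: rat_running_max_def max_def)

lemma rat_running_max_mono:
  "rat_decode (rat_running_max a n) \<le> rat_decode (rat_running_max a (Suc n))"
  by (simp add: rat_running_max_Suc)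

lemma rat_running_max_ge: "k \<le> n \<Longrightarrow> rat_decode (a k) \<le> rat_decode (rat_running_max a n)"
proof (induction n)
  case 0
  then show ?case by (simp add: rat_running_max_def)
next
  case (Suc n)
  then show ?case by (cases "k = Suc n") (auto simp: rat_running_max_Suc le_Suc_eq)
qed

lemma rat_running_max_attained: "\<exists>k\<le>n. rat_decode (rat_running_max a n) = rat_decode (a k)"
proof (induction n)
  case 0
  then show ?case by (simp add: rat_running_max_def)
next
  case (Suc n)
  then show ?case by (auto simp: rat_running_max_Suc max_def intro: le_SucI)
qed

lemma computable_rat_running_max:
  assumes "computable G"
  shows "computable (\<lambda>x.
    rat_running_max (\<lambda>k. G (prod_encode (k, snd (prod_decode x)))) (fst (prod_decode x)))"
  unfolding computable_iff_total_recursive rat_running_max_def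
proof (rule total_recursive_rec_nat)
  have "total_recursive (Suc (Suc 1)) (\<lambda>ys. drop 2 ys ! 0)"
    by (rule total_recursive_cong[of _ "\<lambda>ys. ys ! 2"]) (auto simp: hd_drop_conv_nth)
  then show "total_recursive (Suc (Suc 1)) (\<lambda>ys.
      if rat_decode (ys ! 1)
        \<le> rat_decode (G (prod_encode (Suc (ys ! 0), snd (prod_decode (drop 2 ys ! 0)))))
      then G (prod_encode (Suc (ys ! 0), snd (prod_decode (drop 2 ys ! 0)))) else ys ! 1)"
    by (auto intro!: total_recursive_computable[OF assms])
qed (auto intro!: total_recursive_computable[OF assms])

lemma lower_computable_semi_measureI:
  assumes G: "computable G" and r: "semi_measure r"
    and below: "\<And>n s. real_of_rat (rat_decode (G (prod_encode (n, str_code s)))) \<le> r s"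
    and lim: "\<And>s. (\<lambda>n. real_of_rat (rat_decode (G (prod_encode (n, str_code s))))) \<longlonglongrightarrow> r s"
  shows "lower_computable_semi_measure r"
proof -
  define F where
    "F x = rat_running_max (\<lambda>k. G (prod_encode (k, snd (prod_decode x)))) (fst (prod_decode x))" for x
  have F: "F (prod_encode (n, c)) = rat_running_max (\<lambda>k. G (prod_encode (k, c))) n" for n c
    by (simp add: F_def)
  have "(\<lambda>n. real_of_rat (rat_decode (F (prod_encode (n, str_code s))))) \<longlonglongrightarrow> r s" for s
  proof (rule tendsto_sandwich[OF _ _ lim tendsto_const])
    show "\<forall>\<^sub>F n in sequentially. real_of_rat (rat_decode (G (prod_encode (n, str_code s))))
        \<le> real_of_rat (rat_decode (F (prod_encode (n, str_code s))))"
      unfolding F of_rat_less_eq by (intro always_eventually allI rat_running_max_ge) simp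
    show "\<forall>\<^sub>F n in sequentially. real_of_rat (rat_decode (F (prod_encode (n, str_code s)))) \<le> r s"
    proof (intro always_eventually allI)
      fix n
      obtain k where
        "rat_decode (F (prod_encode (n, str_code s))) = rat_decode (G (prod_encode (k, str_code s)))"
        unfolding F using rat_running_max_attained by blast
      then show "real_of_rat (rat_decode (F (prod_encode (n, str_code s)))) \<le> r s"
        using below[of k s] by simp
    qed
  qed
  moreover have "computable F"
    unfolding F_def using G by (rule computable_rat_running_max)
  ultimately show ?thesis
    unfolding lower_computable_semi_measure_def using r
    by (intro conjI exI[of _ F]) (auto simp: F rat_running_max_mono)
qed

section \<open>Positive semi-definite matrices\<close>

lemma psd_carrier: "psd N A \<Longrightarrow> A \<in> carrier_mat N N"
  unfolding psd_def hermitian_def by simp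

lemma psd_of_loewner_le_0:
  assumes "loewner_le N (0\<^sub>m N N) A"
  shows "psd N A"
proof -
  have "A \<in> carrier_mat N N"
    using assms unfolding loewner_le_def hermitian_def by blast
  then have "A - 0\<^sub>m N N = A"
    by (intro eq_matI) auto
  with assms show ?thesis unfolding loewner_le_def by simp
qed

lemma quadratic_form_supported:
  assumes v: "v \<in> carrier_vec N" and A: "A \<in> carrier_mat N N"
    and S: "S \<subseteq> {..<N}" and supp: "\<And>a. a < N \<Longrightarrow> a \<notin> S \<Longrightarrow> v $ a = 0"
  shows "conjugate v \<bullet> (A *\<^sub>v v) = (\<Sum>a\<in>S. \<Sum>b\<in>S. cnj (v $ a) * A $$ (a, b) * v $ b)"
proof -
  have "conjugate v \<bullet> (A *\<^sub>v v) = (\<Sum>a<N. \<Sum>b<N. cnj (v $ a) * A $$ (a, b) * v $ b)"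
    using v A by (simp add: scalar_prod_def atLeast0LessThan sum_distrib_left mult.assoc)
  also have "\<dots> = (\<Sum>a<N. \<Sum>b\<in>S. cnj (v $ a) * A $$ (a, b) * v $ b)"
    by (intro sum.cong refl sum.mono_neutral_right) (use S supp in auto)
  also have "\<dots> = (\<Sum>a\<in>S. \<Sum>b\<in>S. cnj (v $ a) * A $$ (a, b) * v $ b)"
    by (intro sum.mono_neutral_right) (use S supp in auto)
  finally show ?thesis .
qed

lemma psd_diag_nonneg:
  assumes psd: "psd N A" and i: "i < N"
  shows "0 \<le> Re (A $$ (i, i))"
proof -
  define v where "v = vec N (\<lambda>k. if k = i then 1 else 0 :: complex)"
  have v: "v \<in> carrier_vec N" unfolding v_def by simp
  have "conjugate v \<bullet> (A *\<^sub>v v) = A $$ (i, i)"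
    using quadratic_form_supported[OF v psd_carrier[OF psd], of "{i}"] i by (simp add: v_def)
  then show ?thesis using psd v unfolding psd_def by metis
qed

lemma loewner_le_diag:
  assumes "loewner_le N A B" "i < N"
  shows "Re (A $$ (i, i)) \<le> Re (B $$ (i, i))"
proof -
  have "A \<in> carrier_mat N N" "B \<in> carrier_mat N N"
    using assms(1) unfolding loewner_le_def hermitian_def by auto
  moreover have "0 \<le> Re ((B - A) $$ (i, i))"
    using psd_diag_nonneg assms unfolding loewner_le_def by blast
  ultimately show ?thesis using assms(2) by simp
qed

lemma psd_entry_bound:
  assumes psd: "psd N A" and i: "i < N" and j: "j < N"
  shows "2 * cmod (A $$ (i, j)) \<le> Re (A $$ (i, i)) + Re (A $$ (j, j))"
proof (cases "i = j")
  case True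
  have "A $$ (i, i) = cnj (A $$ (i, i))"
    using psd i unfolding psd_def hermitian_def by blast
  then have "Im (A $$ (i, i)) = 0" by (metis cnj.sel(2) neg_equal_zero)
  then show ?thesis using True psd_diag_nonneg[OF psd i] by (simp add: cmod_eq_Re)
next
  case ij: False
  define z where "z = A $$ (i, j)"
  show ?thesis
  proof (cases "z = 0")
    case True
    then show ?thesis
      using psd_diag_nonneg[OF psd i] psd_diag_nonneg[OF psd j] by (simp add: z_def)
  next
    case False
    define w where "w = cnj z / complex_of_real (cmod z)"
    have zz: "cnj z * z = complex_of_real (cmod z ^ 2)"
      by (simp only: complex_norm_square mult.commute)
    have wz: "w * z = complex_of_real (cmod z)"
      unfolding w_def using False zz by (simp add: power2_eq_square)
    have ww: "cnj w * w = 1"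
      unfolding w_def using False zz by (simp add: power2_eq_square mult.commute)
    have herm: "A $$ (j, i) = cnj z"
      using psd i j unfolding psd_def hermitian_def z_def by blast
    \<comment> \<open>the test vector e_i - w e_j turns the cross terms into -2 |z|\<close>
    define v where "v = vec N (\<lambda>k. if k = i then 1 else if k = j then - w else 0)"
    have v: "v \<in> carrier_vec N" unfolding v_def by simp
    have vij: "v $ i = 1" "v $ j = - w"
      using i j ij by (simp_all add: v_def)
    have "conjugate v \<bullet> (A *\<^sub>v v)
        = (\<Sum>a\<in>{i, j}. \<Sum>b\<in>{i, j}. cnj (v $ a) * A $$ (a, b) * v $ b)"
      by (rule quadratic_form_supported[OF v psd_carrier[OF psd]]) (use i j in \<open>auto simp: v_def\<close>)
    also have "\<dots> = A $$ (i, i) - z * w - cnj w * cnj z + cnj w * A $$ (j, j) * w"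
      using ij by (simp add: vij herm flip: z_def)
    also have "\<dots> = A $$ (i, i) + A $$ (j, j) * (cnj w * w) - (w * z + cnj (w * z))"
      by (simp add: algebra_simps)
    finally have "conjugate v \<bullet> (A *\<^sub>v v)
        = A $$ (i, i) + A $$ (j, j) * (cnj w * w) - (w * z + cnj (w * z))" .
    then have "Re (conjugate v \<bullet> (A *\<^sub>v v)) = Re (A $$ (i, i)) + Re (A $$ (j, j)) - 2 * cmod z"
      unfolding ww wz by simp
    moreover have "0 \<le> Re (conjugate v \<bullet> (A *\<^sub>v v))"
      using psd v unfolding psd_def by blast
    ultimately show ?thesis unfolding z_def by linarith
  qed
qed

lemma psd_weighted_entry_sum_le:
  assumes psd: "psd N A" and w: "\<And>a b. a < N \<Longrightarrow> b < N \<Longrightarrow> cmod (w a b) \<le> 1"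
  shows "Re (\<Sum>a<N. \<Sum>b<N. w a b * A $$ (a, b)) \<le> real N * Re (mat_trace N A)"
proof -
  have "Re (\<Sum>a<N. \<Sum>b<N. w a b * A $$ (a, b)) \<le> (\<Sum>a<N. \<Sum>b<N. cmod (A $$ (a, b)))"
    unfolding Re_sum
  proof (intro sum_mono)
    fix a b assume "a \<in> {..<N}" "b \<in> {..<N}"
    then have "cmod (w a b) * cmod (A $$ (a, b)) \<le> cmod (A $$ (a, b))"
      using w by (simp add: mult_left_le_one_le)
    then show "Re (w a b * A $$ (a, b)) \<le> cmod (A $$ (a, b))"
      using complex_Re_le_cmod[of "w a b * A $$ (a, b)"] by (simp add: norm_mult)
  qed
  also have "\<dots> \<le> (\<Sum>a<N. \<Sum>b<N. (Re (A $$ (a, a)) + Re (A $$ (b, b))) / 2)"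
    using psd_entry_bound[OF psd] by (intro sum_mono) (simp add: field_simps)
  also have "\<dots> = (\<Sum>a<N. (real N * Re (A $$ (a, a)) + Re (mat_trace N A)) / 2)"
    by (simp add: mat_trace_def sum.distrib flip: sum_divide_distrib)
  also have "\<dots> = real N * Re (mat_trace N A)"
    by (simp add: mat_trace_def sum.distrib flip: sum_divide_distrib sum_distrib_left)
  finally show ?thesis .
qed

lemma unit_vector_entry_le_1:
  assumes "unit_vector N \<psi>" "a < N"
  shows "cmod (\<psi> $ a) \<le> 1"
proof -
  have "(cmod (\<psi> $ a))\<^sup>2 \<le> (\<Sum>i<N. (cmod (\<psi> $ i))\<^sup>2)"
    by (rule member_le_sum) (use assms in auto)
  then have "(cmod (\<psi> $ a))\<^sup>2 \<le> 1\<^sup>2"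
    using assms unfolding unit_vector_def by simp
  then show ?thesis by (rule power2_le_imp_le) simp
qed

lemma psd_quadratic_form_le_trace:
  assumes \<psi>: "unit_vector N \<psi>" and psd: "psd N A"
  shows "Re (conjugate \<psi> \<bullet> (A *\<^sub>v \<psi>)) \<le> real N * Re (mat_trace N A)"
proof -
  have "conjugate \<psi> \<bullet> (A *\<^sub>v \<psi>) = (\<Sum>a<N. \<Sum>b<N. (cnj (\<psi> $ a) * \<psi> $ b) * A $$ (a, b))"
    using quadratic_form_supported[OF _ psd_carrier[OF psd], of \<psi> "{..<N}"] \<psi>
    unfolding unit_vector_def by (simp add: ac_simps)
  moreover have "cmod (cnj (\<psi> $ a) * \<psi> $ b) \<le> 1" if "a < N" "b < N" for a b
    using unit_vector_entry_le_1[OF \<psi>] that by (simp add: norm_mult mult_le_one)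
  ultimately show ?thesis
    using psd_weighted_entry_sum_le[OF psd] by presburger
qed

lemma density_matrix_entry_le_1:
  assumes \<rho>: "density_matrix N \<rho>" and a: "a < N" and b: "b < N"
  shows "cmod (\<rho> $$ (a, b)) \<le> 1"
proof -
  have psd: "psd N \<rho>"
    using \<rho> psd_of_loewner_le_0 unfolding density_matrix_def by blast
  have diag: "Re (\<rho> $$ (i, i)) \<le> 1" if "i < N" for i
  proof -
    have "Re (\<rho> $$ (i, i)) \<le> (\<Sum>k<N. Re (\<rho> $$ (k, k)))"
      by (rule member_le_sum) (use that psd_diag_nonneg[OF psd] in auto)
    also have "\<dots> = 1"
      using \<rho> unfolding density_matrix_def mat_trace_def by (simp flip: Re_sum)
    finally show ?thesis .
  qed
  show ?thesis
    using psd_entry_bound[OF psd a b] diag[OF a] diag[OF b] by simp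
qed

lemma density_matrix_trace_mult_le:
  assumes \<rho>: "density_matrix N \<rho>" and psd: "psd N A"
  shows "Re (mat_trace N (\<rho> * A)) \<le> real N * Re (mat_trace N A)"
proof -
  have "\<rho> \<in> carrier_mat N N"
    using \<rho> unfolding density_matrix_def hermitian_def by blast
  then have "mat_trace N (\<rho> * A) = (\<Sum>a<N. \<Sum>b<N. \<rho> $$ (a, b) * A $$ (b, a))"
    using psd_carrier[OF psd] unfolding mat_trace_def
    by (auto simp: scalar_prod_def atLeast0LessThan intro!: sum.cong)
  also have "\<dots> = (\<Sum>a<N. \<Sum>b<N. \<rho> $$ (b, a) * A $$ (a, b))"
    by (rule sum.swap)
  finally show ?thesis
    using psd_weighted_entry_sum_le[OF psd, of "\<lambda>a b. \<rho> $$ (b, a)"]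
      density_matrix_entry_le_1[OF \<rho>]
    by simp
qed

section \<open>Lower-computable semi-POVMs\<close>

lemma semi_POVM_diag_semi_measure:
  assumes R: "semi_POVM N R" and i: "i < N"
  shows "semi_measure (\<lambda>s. Re (R s $$ (i, i)))"
proof -
  have nonneg: "0 \<le> Re (R s $$ (i, i))" for s
    using R i psd_of_loewner_le_0 psd_diag_nonneg unfolding semi_POVM_def by blast
  have partial: "(\<Sum>s\<in>F. Re (R s $$ (i, i))) \<le> 1" if "finite F" for F
  proof -
    have "Re (mat_sum N R F $$ (i, i)) \<le> Re (1\<^sub>m N $$ (i, i))"
      using R that i unfolding semi_POVM_def by (intro loewner_le_diag) auto
    then show ?thesis using i by (simp add: mat_sum_def)
  qed
  have summable: "(\<lambda>s. Re (R s $$ (i, i))) summable_on UNIV"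
    by (rule nonneg_bdd_above_summable_on) (use nonneg partial in \<open>auto intro!: bdd_aboveI2\<close>)
  moreover have "(\<Sum>\<^sub>\<infinity>s. Re (R s $$ (i, i))) \<le> 1"
    by (rule infsum_le_finite_sums[OF summable]) (use partial in auto)
  ultimately show ?thesis unfolding semi_measure_def using nonneg by blast
qed

lemma Re_mat_decode_diag:
  assumes "i < N"
  shows "Re (mat_decode N c $$ (i, i))
    = real_of_rat (rat_decode (fst (prod_decode (nth_default 0 (list_decode c) (i * N + i)))))"
proof -
  \<comment> \<open>entries missing from the code list decode to 0, and so does the code 0\<close>
  have "mat_decode N c $$ (i, i) = gauss_decode (nth_default 0 (list_decode c) (i * N + i))"
    using assms
    by (simp add: mat_decode_def Let_def nth_default_def gauss_decode_def prod_decode_0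
        rat_decode_0 complex_eq_iff)
  then show ?thesis by (simp add: gauss_decode_def split: prod.split)
qed

lemma lower_computable_semi_POVM_diag:
  assumes R: "lower_computable_semi_POVM N R" and i: "i < N"
  shows "lower_computable_semi_measure (\<lambda>s. Re (R s $$ (i, i)))"
proof -
  obtain F where F: "computable F"
    "\<And>s. mat_tendsto N (\<lambda>n. mat_decode N (F (prod_encode (n, str_code s)))) (R s)"
    "\<And>n s. loewner_le N (mat_decode N (F (prod_encode (n, str_code s)))) (R s)"
    using R unfolding lower_computable_semi_POVM_def by blast
  define G where "G x = fst (prod_decode (nth_default 0 (list_decode (F x)) (i * N + i)))" for x
  have G: "real_of_rat (rat_decode (G x)) = Re (mat_decode N (F x) $$ (i, i))" for x
    unfolding G_def Re_mat_decode_diag[OF i] ..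
  have "total_recursive 1 (\<lambda>xs. G (xs ! 0))"
    unfolding G_def
    by (intro total_recursive_prod_decode total_recursive_nth_default_list_decode
        total_recursive_computable[OF F(1)] total_recursive_proj) simp
  moreover have "semi_POVM N R"
    using R unfolding lower_computable_semi_POVM_def by blast
  moreover have
    "(\<lambda>n. Re (mat_decode N (F (prod_encode (n, str_code s))) $$ (i, i))) \<longlonglongrightarrow> Re (R s $$ (i, i))"
    for s
    using F(2)[of s] i unfolding mat_tendsto_def by (intro tendsto_Re) blast
  ultimately show ?thesis
    using loewner_le_diag[OF F(3) i]
    by (intro lower_computable_semi_measureI[of G])
      (simp_all add: G computable_iff_total_recursive semi_POVM_diag_semi_measure i)
qed

lemma lower_computable_semi_POVM_trace_le:
  assumes m: "universal_probability m" and R: "lower_computable_semi_POVM N R"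
  shows "\<exists>K>0. \<forall>s. Re (mat_trace N (R s)) \<le> K * m s"
proof -
  have "\<exists>c>0. \<forall>s. c * Re (R s $$ (i, i)) \<le> m s" if "i < N" for i
    using m lower_computable_semi_POVM_diag[OF R that] unfolding universal_probability_def by simp
  then obtain c where c: "\<And>i. i < N \<Longrightarrow> c i > 0 \<and> (\<forall>s. c i * Re (R s $$ (i, i)) \<le> m s)"
    by metis
  have m_nonneg: "0 \<le> m s" for s
    using m unfolding universal_probability_def lower_computable_semi_measure_def semi_measure_def
    by simp
  define K where "K = 1 + (\<Sum>i<N. 1 / c i)"
  have "0 < K"
    unfolding K_def using c by (intro add_pos_nonneg sum_nonneg) (auto simp: less_imp_le)
  moreover have "Re (mat_trace N (R s)) \<le> K * m s" for s
  proof -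
    have "Re (mat_trace N (R s)) = (\<Sum>i<N. Re (R s $$ (i, i)))"
      by (simp add: mat_trace_def)
    also have "\<dots> \<le> (\<Sum>i<N. m s / c i)"
      using c by (intro sum_mono) (simp add: field_simps)
    also have "\<dots> \<le> K * m s"
      using m_nonneg[of s] by (simp add: K_def sum_distrib_right distrib_right)
    finally show ?thesis .
  qed
  ultimately show ?thesis by blast
qed

theorem mainTheorem5:
  fixes N :: nat and m :: "bool list \<Rightarrow> real" and R :: "bool list \<Rightarrow> complex mat"
  assumes "0 < N"
    and "universal_probability m"
    and "lower_computable_semi_POVM N R"
  shows "(\<exists>c>0. \<forall>\<psi> s. unit_vector N \<psi> \<longrightarrow>
            Re (conjugate \<psi> \<bullet> (R s *\<^sub>v \<psi>)) \<le> c * m s)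
       \<and> (\<exists>c>0. \<forall>\<rho> s. density_matrix N \<rho> \<longrightarrow> Re (mat_trace N (\<rho> * R s)) \<le> c * m s)"
proof -
  obtain K where K: "0 < K" "\<And>s. Re (mat_trace N (R s)) \<le> K * m s"
    using lower_computable_semi_POVM_trace_le[OF assms(2,3)] by blast
  have psd: "psd N (R s)" for s
    using assms(3) unfolding lower_computable_semi_POVM_def semi_POVM_def
    by (blast intro: psd_of_loewner_le_0)
  have trace_le: "real N * Re (mat_trace N (R s)) \<le> (real N * K) * m s" for s
    using mult_left_mono[OF K(2)[of s], of "real N"] by (simp add: mult.assoc)
  have "0 < real N * K" using assms(1) K(1) by simp
  moreover have "Re (conjugate \<psi> \<bullet> (R s *\<^sub>v \<psi>)) \<le> (real N * K) * m s" if "unit_vector N \<psi>" for \<psi> s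
    using psd_quadratic_form_le_trace[OF that psd[of s]] trace_le[of s] by linarith
  moreover have "Re (mat_trace N (\<rho> * R s)) \<le> (real N * K) * m s" if "density_matrix N \<rho>" for \<rho> s
    using density_matrix_trace_mult_le[OF that psd[of s]] trace_le[of s] by linarith
  ultimately show ?thesis by blast
qed

end
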